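(* Fix a target miscoverage level $\bar\alpha\in(0,1)$, a threshold $\lambda_{\max}>0$, and a constant $c\in(0,1)$, and set $\gamma=c\lambda_{\max}$ (so $\gamma\in(0,\lambda_{\max})$). Consider any sequence of weights $(\lambda_t)_{t\ge1}$, actions $(\alpha_t)_{t\ge1}\subset[0,1]$, and error indicators $(\mathrm{err}_t)_{t\ge1}\subset\{0,1\}$ generated as follows, where everything other than the rules below (the data, the planned actions $\alpha^\star_{t|t}$ when $\lambda_t>0$, and the errors when $\alpha_t\in(0,1)$) may be arbitrary, even adversarial: (i) $\lambda_1\in[-\gamma\bar\alpha,\ \lambda_{\max}+\gamma(1-\bar\alpha)]$ (e.g. $\lambda_1\in[0,\lambda_{\max}]$); (ii) at each time $t$, a planned action $\alpha^\star_{t|t}\in[0,1]$ is produced by some procedure satisfying $\alpha^\star_{t|t}=1$ whenever $\lambda_t\le 0$; (iii) $\alpha_t=0$ if $\lambda_t\ge\lambda_{\max}$ and $\alpha_t=\alpha^\star_{t|t}$ otherwise; (iv) $\mathrm{err}_t=\mathbf 1(Y_t\notin C_t(1-\alpha_t))$, where the prediction sets satisfy $C_t(1-0)=\mathcal Y$ (so $\mathrm{err}_t=0$ when $\alpha_t=0$) and $\mathrm{err}_t=1$ when $\alpha_t=1$; (v) $\lambda_{t+1}=\lambda_t-\gamma(\bar\alpha-\mathrm{err}_t)$. Then for every $m\ge 0$ and every $K\ge1$, $$\left|\frac1K\sum_{t=m+1}^{m+K}\mathrm{err}_t-\bar\alpha\right|\le\frac{c+1}{cK}.$$ In particular $\lim_{K\to\infty}\frac1K\sum_{t=1}^K\mathrm{err}_t=\bar\alpha$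 for every realization, hence $\limsup_{K\to\infty}\frac1K\sum_{t=1}^K \mathbf 1(Y_t\notin C_t(1-\alpha_t))\le\bar\alpha$ almost surely, uniformly over all joint distributions of the time series.
   Context: This is the Bellman Conformal Inference (BCI) procedure for online calibration of prediction intervals. A time series $Y_1,Y_2,\dots$ takes values in a space $\mathcal Y$; at each time $t$ a forecaster provides nested prediction sets $C_t(1-\beta)\subset\mathcal Y$, $\beta\in[0,1]$, where $\beta$ is the nominal miscoverage rate and smaller $\beta$ gives a larger set, with the safeguard $C_t(1-0)=\mathcal Y$. The procedure chooses a nominal miscoverage rate $\alpha_t$ and outputs $C_t(1-\alpha_t)$; $\mathrm{err}_t$ indicates that $Y_t$ is not covered. The planned action $\alpha^\star_{t|t}$ is in the paper the first-period minimizer of a stochastic control problem whose objective is (expected sum of interval lengths) $+\lambda_t\cdot$(excess average miscoverage), but only property (ii) is used. *)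

theory Defs
  imports "HOL-Analysis.Analysis"
begin

end

theory Submission
  imports Defs
begin

text \<open>The weight \<open>\<lambda>\<^sub>t\<close> is a feedback process: it can only increase through an error and
  only decrease through a covered step. Since no error occurs once \<open>\<lambda>\<^sub>t \<ge> \<lambda>\<^sub>m\<^sub>a\<^sub>x\<close> and an error is
  forced once \<open>\<lambda>\<^sub>t \<le> 0\<close>, it stays in an interval of length \<open>\<lambda>\<^sub>m\<^sub>a\<^sub>x + \<gamma>\<close>. The update telescopes,
  so over any window of length \<open>K\<close> the number of errors differs from \<open>K \<alpha>\<close> (\<open>\<alpha>\<close> the target rate) by the change of
  \<open>\<lambda>\<close> divided by \<open>\<gamma>\<close>, i.e. by at most \<open>(\<lambda>\<^sub>m\<^sub>a\<^sub>x + \<gamma>) / \<gamma>\<close>.\<close>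

lemma feedback_step_in_interval:
  fixes x e g a U :: real
  assumes "0 \<le> g" "0 \<le> a" "a \<le> 1"
    and "e = 0 \<or> e = 1"
    and "U \<le> x \<Longrightarrow> e = 0" and "x \<le> 0 \<Longrightarrow> e = 1"
    and "- g * a \<le> x" "x \<le> U + g * (1 - a)"
  shows "- g * a \<le> x - g * (a - e) \<and> x - g * (a - e) \<le> U + g * (1 - a)"
proof -
  have "0 \<le> g * a" "0 \<le> g * (1 - a)" using assms(1-3) by simp_all
  moreover have "0 < x" if "e = 0" using that assms(6) by linarith
  moreover have "x < U" if "e = 1" using that assms(5) by linarith
  ultimately show ?thesis using assms(4,7,8) by (auto simp: algebra_simps)
qed

lemma feedback_process_in_interval:
  fixes x e :: "nat \<Rightarrow> real" and g a U :: real
  assumes "0 \<le> g" "0 \<le> a" "a \<le> 1"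
    and step: "\<And>t. n \<le> t \<Longrightarrow> x (Suc t) = x t - g * (a - e t)"
    and binary: "\<And>t. n \<le> t \<Longrightarrow> e t = 0 \<or> e t = 1"
    and high: "\<And>t. n \<le> t \<Longrightarrow> U \<le> x t \<Longrightarrow> e t = 0"
    and low: "\<And>t. n \<le> t \<Longrightarrow> x t \<le> 0 \<Longrightarrow> e t = 1"
    and init: "- g * a \<le> x n" "x n \<le> U + g * (1 - a)"
    and "n \<le> t"
  shows "- g * a \<le> x t \<and> x t \<le> U + g * (1 - a)"
  using \<open>n \<le> t\<close>
proof (induction t rule: dec_induct)
  case base
  then show ?case using init by simp
next
  case (step t)
  then show ?case
    using feedback_step_in_interval[OF assms(1-3) binary high low] step.hyps
    by (simp add: assms(4))
qed

lemma window_average_deviation: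
  fixes x e :: "nat \<Rightarrow> real" and g a lo hi :: real
  assumes "0 < g"
    and step: "\<And>t. n \<le> t \<Longrightarrow> x (Suc t) = x t - g * (a - e t)"
    and bounded: "\<And>t. n \<le> t \<Longrightarrow> lo \<le> x t \<and> x t \<le> hi"
    and "n \<le> Suc m" "1 \<le> K"
  shows "\<bar>(1 / real K) * (\<Sum>t = m + 1..m + K. e t) - a\<bar> \<le> (hi - lo) / (g * real K)"
proof -
  have "x (Suc m + K) - x (Suc m) = (\<Sum>t = Suc m..<Suc m + K. x (Suc t) - x t)"
    by (simp add: sum_Suc_diff')
  also have "\<dots> = g * (\<Sum>t = Suc m..<Suc m + K. e t - a)"
    using \<open>n \<le> Suc m\<close> by (simp add: sum_distrib_left step algebra_simps)
  also have "\<dots> = g * ((\<Sum>t = m + 1..m + K. e t) - real K * a)"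
    by (simp add: sum_subtractf atLeastLessThanSuc_atLeastAtMost)
  finally have change: "x (Suc m + K) - x (Suc m) = g * ((\<Sum>t = m + 1..m + K. e t) - real K * a)" .
  have "(1 / real K) * (\<Sum>t = m + 1..m + K. e t) - a = ((\<Sum>t = m + 1..m + K. e t) - real K * a) / real K"
    using \<open>1 \<le> K\<close> by (simp add: field_simps)
  also have "\<dots> = (x (Suc m + K) - x (Suc m)) / (g * real K)"
    using \<open>0 < g\<close> unfolding change by simp
  finally have "(1 / real K) * (\<Sum>t = m + 1..m + K. e t) - a = (x (Suc m + K) - x (Suc m)) / (g * real K)" .
  moreover have "\<bar>x (Suc m + K) - x (Suc m)\<bar> \<le> hi - lo"
    using bounded[of "Suc m"] bounded[of "Suc m + K"] \<open>n \<le> Suc m\<close> by (simp add: abs_le_iff)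
  ultimately show ?thesis
    using \<open>0 < g\<close> \<open>1 \<le> K\<close> by (simp add: divide_right_mono)
qed

lemma LIMSEQ_of_abs_diff_le_const_over_n:
  fixes f :: "nat \<Rightarrow> real"
  assumes "\<And>K. 1 \<le> K \<Longrightarrow> \<bar>f K - a\<bar> \<le> B / real K"
  shows "f \<longlonglongrightarrow> a"
proof -
  have "(\<lambda>K. f K - a) \<longlonglongrightarrow> 0"
  proof (rule Lim_null_comparison)
    show "\<forall>\<^sub>F K in sequentially. norm (f K - a) \<le> B * (1 / real K)"
      using eventually_ge_at_top[of "1::nat"] by eventually_elim (use assms in simp)
    show "(\<lambda>K. B * (1 / real K)) \<longlonglongrightarrow> 0"
      by (intro tendsto_mult_right_zero lim_const_over_n)
  qed
  then show ?thesis by (simp add: LIM_zero_iff)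
qed

theorem theorem1:
  fixes abar lmax c :: real
    and lam alpha astar err :: "nat \<Rightarrow> real"
    and Y :: "nat \<Rightarrow> 'y"
    and C :: "nat \<Rightarrow> real \<Rightarrow> 'y set"
  assumes abar: "0 < abar" "abar < 1"
    and lmax: "0 < lmax"
    and c: "0 < c" "c < 1"
    and init: "- (c * lmax) * abar \<le> lam 1" "lam 1 \<le> lmax + (c * lmax) * (1 - abar)"
    and nested: "\<And>t a b. 1 \<le> t \<Longrightarrow> 0 \<le> a \<Longrightarrow> a \<le> b \<Longrightarrow> b \<le> 1 \<Longrightarrow>
                   C t (1 - b) \<subseteq> C t (1 - a)"
    and full: "\<And>t. 1 \<le> t \<Longrightarrow> C t (1 - 0) = UNIV"
    and astar_range: "\<And>t. 1 \<le> t \<Longrightarrow> 0 \<le> astar t \<and> astar t \<le> 1"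
    and astar_nonpos: "\<And>t. 1 \<le> t \<Longrightarrow> lam t \<le> 0 \<Longrightarrow> astar t = 1"
    and alpha_def: "\<And>t. 1 \<le> t \<Longrightarrow> alpha t = (if lam t \<ge> lmax then 0 else astar t)"
    and err_def: "\<And>t. 1 \<le> t \<Longrightarrow> err t = (if Y t \<notin> C t (1 - alpha t) then 1 else 0)"
    and err_one: "\<And>t. 1 \<le> t \<Longrightarrow> alpha t = 1 \<Longrightarrow> Y t \<notin> C t (1 - alpha t)"
    and update: "\<And>t. 1 \<le> t \<Longrightarrow> lam (Suc t) = lam t - (c * lmax) * (abar - err t)"
  shows "(\<forall>m K::nat. 1 \<le> K \<longrightarrow>
            \<bar>(1 / real K) * (\<Sum>t = m + 1..m + K. err t) - abar\<bar> \<le> (c + 1) / (c * real K))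
         \<and> ((\<lambda>K. (1 / real K) * (\<Sum>t = 1..K. err t)) \<longlonglongrightarrow> abar)"
proof -
  define g where "g = c * lmax"
  have "0 < g" using c lmax by (simp add: g_def)
  have no_error: "err t = 0" if "1 \<le> t" "lmax \<le> lam t" for t
    using that alpha_def err_def full by simp
  have forced_error: "err t = 1" if "1 \<le> t" "lam t \<le> 0" for t
    using that lmax alpha_def astar_nonpos err_def err_one by simp
  have step: "lam (Suc t) = lam t - g * (abar - err t)" if "1 \<le> t" for t
    using update[OF that] by (simp add: g_def)
  have bounded: "- g * abar \<le> lam t \<and> lam t \<le> lmax + g * (1 - abar)" if "1 \<le> t" for t
    by (rule feedback_process_in_interval[where n = 1 and e = err])
      (use \<open>0 < g\<close> abar that step err_def no_error forced_error init in \<open>simp_all add: g_def\<close>)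
  have window: "\<bar>(1 / real K) * (\<Sum>t = m + 1..m + K. err t) - abar\<bar> \<le> (c + 1) / (c * real K)"
    if "1 \<le> K" for m K :: nat
  proof -
    have "\<bar>(1 / real K) * (\<Sum>t = m + 1..m + K. err t) - abar\<bar>
        \<le> (lmax + g * (1 - abar) - - g * abar) / (g * real K)"
      by (rule window_average_deviation[where n = 1 and x = lam and e = err])
        (use \<open>0 < g\<close> step bounded that in auto)
    also have "\<dots> = (c + 1) / (c * real K)"
      using lmax c that by (simp add: g_def field_simps)
    finally show ?thesis .
  qed
  moreover have "(\<lambda>K. (1 / real K) * (\<Sum>t = 1..K. err t)) \<longlonglongrightarrow> abar"
    by (rule LIMSEQ_of_abs_diff_le_const_over_n[where B = "(c + 1) / c"]) (use window[of _ 0] in simp)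
  ultimately show ?thesis by blast
qed

end
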